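(* Consider Primal Online Balanced Descent with parameter $\beta>0$, $\ell_2$ norm $\|\cdot\|=\|\cdot\|_2$ and Euclidean projection, at round $t$, producing $x_t$ from $x_{t-1}$ and cost function $f_t$ with minimizer $v_t$. Let $x_t^*\in\mathcal{X}$ be a point with $H_t^*=f_t(x_t^* )<H_t=f_t(x_t)$, and suppose $f_t(x)\ge\alpha\|x-v_t\|$ for all $x$, where $\alpha>0$. Then $$\|x_t-x_t^*\|-\|x_t^*-x_{t-1}\|\le-\gamma\|x_t-x_{t-1}\|,\qquad\text{where }\gamma=\sqrt{1+\left(\tfrac{2}{\alpha\beta}\right)^2}-\tfrac{2}{\alpha\beta}.$$
   Context: Primal Online Balanced Descent with parameter $\beta>0$ (norm $\|\cdot\|$, mirror map $\Phi$; here $\Phi(x)=\frac12\|x\|_2^2$): given $x_{t-1}$ and convex $f_t$, let $v_t=\arg\min_x f_t(x)$; if $\|x_{t-1}-v_t\|<\beta f_t(v_t)$ set $x_t=v_t$; otherwise, with $K^l_t=\{x:f_t(x)\le l\}$ and $x(l)=\Pi^\Phi_{K^l_t}(x_{t-1})$, where $\Pi^\Phi_K(x)=\arg\min_{y\in K}D_\Phi(y,x)$ and $D_\Phi(x,y)=\Phi(x)-\Phi(y)-\nabla\Phi(y)^T(x-y)$, increase $l$ until $\|x(l)-x_{t-1}\|=\beta l$ and set $x_t=x(l)$. *)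

theory Defs
  imports "HOL-Analysis.Analysis"
begin

text \<open>Mirror map Phi(x) = 1/2 ||x||_2^2 and its Bregman divergence
  D_Phi(x,y) = Phi x - Phi y - grad Phi(y)^T (x - y), with grad Phi(y) = y.\<close>

definition Phi :: "'a::euclidean_space \<Rightarrow> real" where
  "Phi x = (1/2) * (norm x)^2"

definition bregman :: "'a::euclidean_space \<Rightarrow> 'a \<Rightarrow> real" where
  "bregman x y = Phi x - Phi y - inner y (x - y)"

definition is_bregman_proj :: "'a::euclidean_space set \<Rightarrow> 'a \<Rightarrow> 'a \<Rightarrow> bool" where
  "is_bregman_proj K x p \<longleftrightarrow> p \<in> K \<and> (\<forall>y\<in>K. bregman p x \<le> bregman y x)"

definition sublevel :: "('a \<Rightarrow> real) \<Rightarrow> real \<Rightarrow> 'a set" where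
  "sublevel f l = {x. f x \<le> l}"

text \<open>One round of Primal Online Balanced Descent: from x_{t-1} = xprev, cost f with
  minimiser v, the algorithm outputs x_t = xt.  "Increase l until ||x(l)-x_{t-1}|| = beta l"
  is rendered as: xt = x(l) for a level l at which this balance equation holds.\<close>
definition pobd_step :: "real \<Rightarrow> ('a::euclidean_space \<Rightarrow> real) \<Rightarrow> 'a \<Rightarrow> 'a \<Rightarrow> 'a \<Rightarrow> bool" where
  "pobd_step \<beta> f v xprev xt \<longleftrightarrow>
     (if norm (xprev - v) < \<beta> * f v then xt = v
      else (\<exists>l. is_bregman_proj (sublevel f l) xprev xt \<and> norm (xt - xprev) = \<beta> * l))"

end

theory Submission
  imports Defs
begin

text \<open>For the Euclidean mirror map the Bregman projection is the closest-point projection, so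
  x_t is the closest point to x_{t-1} in the convex sublevel set K = {f \<le> l}, which also contains
  x^*. The obtuse-angle property of such projections gives the Pythagorean inequality
  |x_t - x^*|^2 + |x_t - x_{t-1}|^2 \<le> |x^* - x_{t-1}|^2. Both points lie in K, and the growth
  condition puts K inside the ball of radius l/\<alpha> around v; with the balance equation
  |x_t - x_{t-1}| = \<beta> l this gives |x_t - x^*| \<le> c |x_t - x_{t-1}| for c = 2/(\<alpha>\<beta>).
  An elementary inequality then bounds a + (sqrt(1 + c^2) - c) b by sqrt(a^2 + b^2)
  whenever a \<le> c b.\<close>

lemma bregman_eq_half_norm_sq: "bregman y x = (norm (y - x))\<^sup>2 / 2"
  unfolding bregman_def Phi_def
  by (simp add: power2_norm_eq_inner inner_diff_left inner_diff_right inner_commute algebra_simps)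

lemma is_bregman_proj_iff_closest:
  "is_bregman_proj K x p \<longleftrightarrow> p \<in> K \<and> (\<forall>y\<in>K. dist x p \<le> dist x y)"
  unfolding is_bregman_proj_def bregman_eq_half_norm_sq dist_norm
  by (simp add: norm_minus_commute norm_le_square[symmetric])

lemma convex_sublevel:
  assumes "convex_on UNIV f"
  shows "convex (sublevel f l)"
  unfolding convex_alt
proof (intro ballI allI impI)
  fix x y :: 'a and u :: real
  assume "x \<in> sublevel f l" "y \<in> sublevel f l" "0 \<le> u \<and> u \<le> 1"
  then have "f ((1 - u) *\<^sub>R x + u *\<^sub>R y) \<le> (1 - u) * f x + u * f y"
    "(1 - u) * f x + u * f y \<le> (1 - u) * l + u * l"
    using convex_onD[OF assms, of u x y] by (auto simp: sublevel_def intro!: add_mono mult_left_mono)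
  then show "(1 - u) *\<^sub>R x + u *\<^sub>R y \<in> sublevel f l"
    by (simp add: sublevel_def algebra_simps)
qed

lemma closed_sublevel:
  fixes f :: "'a::euclidean_space \<Rightarrow> real"
  assumes "convex_on UNIV f"
  shows "closed (sublevel f l)"
  unfolding sublevel_def
  by (intro closed_Collect_le continuous_on_const convex_on_continuous[OF open_UNIV assms])

lemma bregman_proj_pythagoras:
  fixes K :: "'a::euclidean_space set"
  assumes "convex K" "closed K" "is_bregman_proj K x p" "y \<in> K"
  shows "(norm (y - p))\<^sup>2 + (norm (p - x))\<^sup>2 \<le> (norm (y - x))\<^sup>2"
proof -
  have "inner (x - p) (y - p) \<le> 0"
    using assms by (intro any_closest_point_dot) (auto simp: is_bregman_proj_iff_closest)
  moreover have "y - x = (y - p) + (p - x)" by simp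
  then have "(norm (y - x))\<^sup>2 = (norm (y - p))\<^sup>2 + (norm (p - x))\<^sup>2 - 2 * inner (x - p) (y - p)"
    by (simp add: power2_norm_eq_inner inner_add_left inner_add_right inner_diff_left
        inner_commute algebra_simps)
  ultimately show ?thesis by linarith
qed

lemma add_tilted_le_sqrt_sum_squares:
  fixes a b c :: real
  assumes "0 \<le> a" "0 \<le> b" "0 \<le> c" "a \<le> c * b"
  shows "a + (sqrt (1 + c\<^sup>2) - c) * b \<le> sqrt (a\<^sup>2 + b\<^sup>2)"
proof -
  define s where "s = sqrt (1 + c\<^sup>2)"
  have "c \<le> s" unfolding s_def by (rule real_le_rsqrt) simp
  have "s\<^sup>2 = 1 + c\<^sup>2" unfolding s_def by simp
  then have s_c: "(s - c) * (2 * c + (s - c)) = 1"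
    by (simp add: algebra_simps power2_eq_square)
  have "2 * a * (s - c) * b \<le> 2 * (c * b) * (s - c) * b"
    using assms \<open>c \<le> s\<close> by (intro mult_right_mono) (auto intro: mult_left_mono)
  then have "(a + (s - c) * b)\<^sup>2 \<le> a\<^sup>2 + b\<^sup>2"
    using s_c by (simp add: power2_eq_square algebra_simps)
  moreover have "0 \<le> a + (s - c) * b" using assms \<open>c \<le> s\<close> by simp
  ultimately show ?thesis unfolding s_def[symmetric] by (simp add: real_le_rsqrt)
qed

lemma pobd_step_balanced:
  assumes "pobd_step \<beta> f v xprev xt" "f v < f xt"
  obtains l where "is_bregman_proj (sublevel f l) xprev xt" "norm (xt - xprev) = \<beta> * l"
  using assms unfolding pobd_step_def by (auto split: if_splits)

lemma dist_le_in_sublevel_of_growth: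
  assumes "\<forall>x. \<alpha> * norm (x - v) \<le> f x" "0 < \<alpha>" "x \<in> sublevel f l" "y \<in> sublevel f l"
  shows "\<alpha> * norm (x - y) \<le> 2 * l"
proof -
  have "norm (x - y) \<le> norm (x - v) + norm (y - v)"
    by (metis norm_diff_triangle_le norm_minus_commute order_refl)
  then have "\<alpha> * norm (x - y) \<le> \<alpha> * norm (x - v) + \<alpha> * norm (y - v)"
    using \<open>0 < \<alpha>\<close> by (simp add: distrib_left[symmetric])
  also have "\<dots> \<le> 2 * l"
    using assms(1,3,4) unfolding sublevel_def by (smt (verit) mem_Collect_eq)
  finally show ?thesis .
qed

theorem lemma13:
  fixes f :: "'a::euclidean_space \<Rightarrow> real"
    and v xprev xt xstar :: 'a
    and \<alpha> \<beta> :: real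
  assumes "\<beta> > 0" and "\<alpha> > 0"
    and "convex_on UNIV f"
    and "\<forall>x. f v \<le> f x"
    and "pobd_step \<beta> f v xprev xt"
    and "f xstar < f xt"
    and "\<forall>x. f x \<ge> \<alpha> * norm (x - v)"
  shows "norm (xt - xstar) - norm (xstar - xprev)
           \<le> - (sqrt (1 + (2 / (\<alpha> * \<beta>))^2) - 2 / (\<alpha> * \<beta>)) * norm (xt - xprev)"
proof -
  define c where "c = 2 / (\<alpha> * \<beta>)"
  have "f v < f xt" using assms(4,6) by (metis le_less_trans)
  with assms(5) obtain l where proj: "is_bregman_proj (sublevel f l) xprev xt"
    and balance: "norm (xt - xprev) = \<beta> * l"
    by (rule pobd_step_balanced)
  have xt_in: "xt \<in> sublevel f l" using proj unfolding is_bregman_proj_def by simp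
  then have xstar_in: "xstar \<in> sublevel f l" using assms(6) by (simp add: sublevel_def)
  have "\<alpha> * norm (xt - xstar) \<le> 2 * l"
    using assms(2,7) xt_in xstar_in by (intro dist_le_in_sublevel_of_growth) auto
  then have close: "norm (xt - xstar) \<le> c * norm (xt - xprev)"
    unfolding c_def balance using assms(1,2) by (simp add: field_simps)
  have "(norm (xstar - xt))\<^sup>2 + (norm (xt - xprev))\<^sup>2 \<le> (norm (xstar - xprev))\<^sup>2"
    by (rule bregman_proj_pythagoras[OF convex_sublevel closed_sublevel proj xstar_in])
      (use assms(3) in auto)
  then have "sqrt ((norm (xt - xstar))\<^sup>2 + (norm (xt - xprev))\<^sup>2) \<le> norm (xstar - xprev)"
    by (simp add: norm_minus_commute real_sqrt_le_iff real_le_lsqrt)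
  moreover have "norm (xt - xstar) + (sqrt (1 + c\<^sup>2) - c) * norm (xt - xprev)
      \<le> sqrt ((norm (xt - xstar))\<^sup>2 + (norm (xt - xprev))\<^sup>2)"
    using close assms(1,2) by (intro add_tilted_le_sqrt_sum_squares) (auto simp: c_def)
  ultimately show ?thesis unfolding c_def[symmetric] by (simp add: algebra_simps)
qed

end
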